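(* Let $C$ be an $n\times n$ matrix of non-negative integers, and let $m\neq n$. Suppose: - all entries in the first $m$ rows of $C$ are non-zero; - all entries in the last $n-m$ rows of $C$ are zero; - at least one entry of $C$ equals $1$. Then there is an $(n+2)\times(n+2)$ integer matrix $D=(d_{il})$ such that: (i) the last $(n+2)-(m+2)$ rows of $D$ are identically zero; (ii) every entry in the first $m+2$ rows of $D$ is strictly positive; (iii) $d_{i1}=1$ for all $1\le i\le m+2$; (iv) the top-left $(m+2)\times(m+2)$ corner of $D$ has determinant zero; (v) $J_{nm}+C\sim_M J_{(n+2)(m+2)}+D$.
   Context: $J_{nm}$ ($0\le m\le n$) is the $n\times n$ matrix whose $i$-th row, for $i\le m$, has a $1$ in position $i$ and $0$ elsewhere, and whose last $n-m$ rows consist entirely of $\infty$. Arithmetic convention: $\infty+a=\infty$. For an $X\times X$ matrix $A$ with entries in $\{0,1,2,\dots\}\cup\{\infty\}$, $G_A$ is the graph with vertex set $X$ and exactly $A(x,y)$ edges from $x$ to $y$. For matrices, $A\sim_M B$ means $G_A\sim_M G_B$. A graph may have multiple edges and loops. A source receives no edges, a sink emits no edges, and an infinite emitter emits infinitely many edges. A vertex is singular if it is a sink or infinite emitter, and regular otherwise. Move-equivalence $\sim_M$ is the smallest equivalence relation on graphs with finitely many vertices such that $G\sim_M E$ whenever $E$ is isomorphic to a graph obtained from $G$ by one of the following moves. (S) Delete a regular source together with the edges it emits. (R) For a regular vertex $u$ emitting exactly one edge $f$, with $r(f)\neq u$, and all of whose incoming edges have the same source $v$: delete $u$, $f$ and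 the edges into $u$, and add for each $e\in r^{-1}(u)$ an edge $[ef]$ from $v$ to $r(f)$. (O) Out-splitting at a non-sink $v$ along a partition $\mathcal E_1,\dots,\mathcal E_n$ of $s^{-1}(v)$ with at most one infinite part. Replace $v$ by $v^1,\dots,v^n$. Each edge $e$ into $v$ becomes copies $e^1,\dots,e^n$ with $r(e^i)=v^i$ and source $s(e)$, or source $v^j$ if $s(e)=v$ and $e\in\mathcal E_j$. An edge from $v$ to $w\neq v$ lying in $\mathcal E_i$ gets source $v^i$. (I) In-splitting at a regular non-source $v$ along a partition $\mathcal E_1,\dots,\mathcal E_n$ of $r^{-1}(v)$. Replace $v$ by $v^1,\dots,v^n$. Each edge $e$ out of $v$ becomes copies $e^1,\dots,e^n$ with $s(e^i)=v^i$ and range $r(e)$, or range $v^j$ if $r(e)=v$ and $e\in\mathcal E_j$. An edge into $v$ from $w\neq v$ lying in $\mathcal E_i$ gets range $v^i$. *)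

theory Defs
  imports "Jordan_Normal_Form.Determinant" "HOL-Library.Nat_Bijection" "HOL-Library.Extended_Nat"
begin

record ('v, 'e) dgraph =
  verts :: "'v set"
  edges :: "'e set"
  src   :: "'e \<Rightarrow> 'v"
  rng   :: "'e \<Rightarrow> 'v"

definition wf_graph :: "('v, 'e) dgraph \<Rightarrow> bool" where
  "wf_graph G \<longleftrightarrow> finite (verts G) \<and>
     (\<forall>e\<in>edges G. src G e \<in> verts G \<and> rng G e \<in> verts G)"

definition out_edges :: "('v, 'e) dgraph \<Rightarrow> 'v \<Rightarrow> 'e set" where
  "out_edges G v = {e\<in>edges G. src G e = v}"

definition in_edges :: "('v, 'e) dgraph \<Rightarrow> 'v \<Rightarrow> 'e set" where
  "in_edges G v = {e\<in>edges G. rng G e = v}"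

definition is_source :: "('v, 'e) dgraph \<Rightarrow> 'v \<Rightarrow> bool" where
  "is_source G v \<longleftrightarrow> in_edges G v = {}"

definition is_sink :: "('v, 'e) dgraph \<Rightarrow> 'v \<Rightarrow> bool" where
  "is_sink G v \<longleftrightarrow> out_edges G v = {}"

definition is_inf_emitter :: "('v, 'e) dgraph \<Rightarrow> 'v \<Rightarrow> bool" where
  "is_inf_emitter G v \<longleftrightarrow> infinite (out_edges G v)"

definition is_regular :: "('v, 'e) dgraph \<Rightarrow> 'v \<Rightarrow> bool" where
  "is_regular G v \<longleftrightarrow> \<not> is_sink G v \<and> \<not> is_inf_emitter G v"

definition graph_iso :: "('v, 'e) dgraph \<Rightarrow> ('w, 'f) dgraph \<Rightarrow> bool" where
  "graph_iso G H \<longleftrightarrow> (\<exists>\<phi> \<psi>. bij_betw \<phi> (verts G) (verts H) \<and> bij_betw \<psi> (edges G) (edges H) \<and>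
     (\<forall>e\<in>edges G. src H (\<psi> e) = \<phi> (src G e) \<and> rng H (\<psi> e) = \<phi> (rng G e)))"

definition move_S_graph :: "('v, 'e) dgraph \<Rightarrow> 'v \<Rightarrow> ('v, 'e) dgraph" where
  "move_S_graph G v = \<lparr>verts = verts G - {v}, edges = edges G - out_edges G v,
                        src = src G, rng = rng G\<rparr>"

definition move_S_ok :: "('v, 'e) dgraph \<Rightarrow> 'v \<Rightarrow> bool" where
  "move_S_ok G v \<longleftrightarrow> v \<in> verts G \<and> is_regular G v \<and> is_source G v"

text \<open>(R) reduction at u with unique outgoing edge f; incoming edges all from v.
  Edge Inl e is an old edge, Inr e is the new edge [ef].\<close>
definition move_R_graph :: "('v, 'e) dgraph \<Rightarrow> 'v \<Rightarrow> 'e \<Rightarrow> 'v \<Rightarrow> ('v, 'e + 'e) dgraph" where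
  "move_R_graph G u f v = \<lparr>verts = verts G - {u},
     edges = Inl ` (edges G - {f} - in_edges G u) \<union> Inr ` in_edges G u,
     src = (\<lambda>x. case x of Inl e \<Rightarrow> src G e | Inr e \<Rightarrow> v),
     rng = (\<lambda>x. case x of Inl e \<Rightarrow> rng G e | Inr e \<Rightarrow> rng G f)\<rparr>"

definition move_R_ok :: "('v, 'e) dgraph \<Rightarrow> 'v \<Rightarrow> 'e \<Rightarrow> 'v \<Rightarrow> bool" where
  "move_R_ok G u f v \<longleftrightarrow> u \<in> verts G \<and> v \<in> verts G \<and> is_regular G u \<and>
     out_edges G u = {f} \<and> rng G f \<noteq> u \<and> (\<forall>e\<in>in_edges G u. src G e = v)"

text \<open>(O) out-splitting at v along the partition of the out-edges of v into the
  parts {e. p e = i}, i = 1..k.  New vertex Inl w is the old w (w ~= v),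
  Inr i is v^i.  Edge Inl e is an old edge not entering v, Inr (e,i) is e^i.\<close>
definition out_split_graph :: "('v, 'e) dgraph \<Rightarrow> 'v \<Rightarrow> nat \<Rightarrow> ('e \<Rightarrow> nat) \<Rightarrow> ('v + nat, 'e + 'e \<times> nat) dgraph" where
  "out_split_graph G v k p =
    (let s' = (\<lambda>e. if src G e = v then Inr (p e) else Inl (src G e)) in
     \<lparr>verts = Inl ` (verts G - {v}) \<union> Inr ` {1..k},
      edges = Inl ` (edges G - in_edges G v) \<union> (\<lambda>(e,i). Inr (e,i)) ` (in_edges G v \<times> {1..k}),
      src = (\<lambda>x. case x of Inl e \<Rightarrow> s' e | Inr (e,i) \<Rightarrow> s' e),
      rng = (\<lambda>x. case x of Inl e \<Rightarrow> Inl (rng G e) | Inr (e,i) \<Rightarrow> Inr i)\<rparr>)"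

definition out_split_ok :: "('v, 'e) dgraph \<Rightarrow> 'v \<Rightarrow> nat \<Rightarrow> ('e \<Rightarrow> nat) \<Rightarrow> bool" where
  "out_split_ok G v k p \<longleftrightarrow> v \<in> verts G \<and> \<not> is_sink G v \<and> 1 \<le> k \<and>
     (\<forall>e\<in>out_edges G v. p e \<in> {1..k}) \<and>
     (\<forall>i\<in>{1..k}. {e\<in>out_edges G v. p e = i} \<noteq> {}) \<and>
     (\<forall>i\<in>{1..k}. \<forall>j\<in>{1..k}. infinite {e\<in>out_edges G v. p e = i} \<and>
         infinite {e\<in>out_edges G v. p e = j} \<longrightarrow> i = j)"

text \<open>(I) in-splitting at v along the partition of the in-edges of v into the
  parts {e. p e = i}, i = 1..k.  Edge Inl e is an old edge not leaving v,
  Inr (e,i) is e^i.\<close>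
definition in_split_graph :: "('v, 'e) dgraph \<Rightarrow> 'v \<Rightarrow> nat \<Rightarrow> ('e \<Rightarrow> nat) \<Rightarrow> ('v + nat, 'e + 'e \<times> nat) dgraph" where
  "in_split_graph G v k p =
    (let r' = (\<lambda>e. if rng G e = v then Inr (p e) else Inl (rng G e)) in
     \<lparr>verts = Inl ` (verts G - {v}) \<union> Inr ` {1..k},
      edges = Inl ` (edges G - out_edges G v) \<union> (\<lambda>(e,i). Inr (e,i)) ` (out_edges G v \<times> {1..k}),
      src = (\<lambda>x. case x of Inl e \<Rightarrow> Inl (src G e) | Inr (e,i) \<Rightarrow> Inr i),
      rng = (\<lambda>x. case x of Inl e \<Rightarrow> r' e | Inr (e,i) \<Rightarrow> r' e)\<rparr>)"

definition in_split_ok :: "('v, 'e) dgraph \<Rightarrow> 'v \<Rightarrow> nat \<Rightarrow> ('e \<Rightarrow> nat) \<Rightarrow> bool" where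
  "in_split_ok G v k p \<longleftrightarrow> v \<in> verts G \<and> is_regular G v \<and> \<not> is_source G v \<and> 1 \<le> k \<and>
     (\<forall>e\<in>in_edges G v. p e \<in> {1..k}) \<and>
     (\<forall>i\<in>{1..k}. {e\<in>in_edges G v. p e = i} \<noteq> {})"

text \<open>One move step between graphs with finitely many vertices (vertices and
  edges are represented in nat; every graph considered has countably many edges).\<close>
definition move_step :: "(nat, nat) dgraph \<Rightarrow> (nat, nat) dgraph \<Rightarrow> bool" where
  "move_step G E \<longleftrightarrow> wf_graph G \<and> wf_graph E \<and>
     ((\<exists>v. move_S_ok G v \<and> graph_iso E (move_S_graph G v)) \<or>
      (\<exists>u f v. move_R_ok G u f v \<and> graph_iso E (move_R_graph G u f v)) \<or>
      (\<exists>v k p. out_split_ok G v k p \<and> graph_iso E (out_split_graph G v k p)) \<or>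
      (\<exists>v k p. in_split_ok G v k p \<and> graph_iso E (in_split_graph G v k p)))"

definition move_equiv :: "(nat, nat) dgraph \<Rightarrow> (nat, nat) dgraph \<Rightarrow> bool" where
  "move_equiv = (\<lambda>G E. move_step G E \<or> move_step E G)\<^sup>*\<^sup>*"

text \<open>G_A for an N x N matrix A (indices 0..N-1) with entries in nat \<union> {\<infinity>}:
  exactly A x y edges from x to y (countably infinitely many if A x y = \<infinity>).\<close>
definition graph_of_matrix :: "nat \<Rightarrow> (nat \<Rightarrow> nat \<Rightarrow> enat) \<Rightarrow> (nat, nat) dgraph" where
  "graph_of_matrix N A =
     \<lparr>verts = {0..<N},
      edges = {prod_encode (x, prod_encode (y, k)) | x y k. x < N \<and> y < N \<and> enat k < A x y},
      src = (\<lambda>e. fst (prod_decode e)),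
      rng = (\<lambda>e. fst (prod_decode (snd (prod_decode e))))\<rparr>"

text \<open>J_{nm} (0-based indices): row i < m has 1 at position i and 0 elsewhere,
  rows m..n-1 are entirely \<infinity>.\<close>
definition Jmat :: "nat \<Rightarrow> nat \<Rightarrow> nat \<Rightarrow> nat \<Rightarrow> enat" where
  "Jmat n m i j = (if i < m then (if i = j then 1 else 0) else \<infinity>)"

end

theory Submission
  imports Defs "HOL-Library.Countable_Set" "HOL-Combinatorics.Transposition"
begin

text \<open>
  A graph of a matrix is determined up to isomorphism by its edge multiplicities, and splitting
  a vertex into two parts is a matrix operation: an out-split writes a row as a sum of two rows
  and duplicates the corresponding column, an in-split does the same with a column and a row.

  Adding the column of an infinite emitter \<open>s\<close> to the column of a regular vertex \<open>w\<close> is a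
  move equivalence: out-splitting \<open>s\<close> into the row of \<open>w\<close> and an infinite row gives the
  in-split of \<open>w\<close> in the enlarged matrix.  Adding column \<open>m\<close> twice to column \<open>0\<close> of
  \<open>J + C\<close> makes column \<open>0\<close> large enough for two in-splits at \<open>0\<close> that split off columns
  of ones; the result is also the out-split of a matrix in which vertex \<open>0\<close> emits twice the
  edges of a new regular vertex \<open>h\<close>.  Out-splitting the emitter \<open>m\<close> into an infinite row and
  the row of \<open>h\<close> with one loop at \<open>h\<close> redirected to \<open>m\<close> creates a second regular vertex.
  Placed right after the old regular vertices, \<open>h\<close> and this vertex give rows \<open>m\<close> and
  \<open>m + 1\<close> of \<open>J + D\<close> that differ on the corner by \<open>e\<^sub>m - e\<^sub>m\<^sub>+\<^sub>1\<close>, so the corner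
  of \<open>D\<close> has two equal rows; the columns of ones make the first column of \<open>D\<close> constant \<open>1\<close>.
\<close>

definition ecard :: "'a set \<Rightarrow> enat" where
  "ecard S = (if finite S then enat (card S) else \<infinity>)"

lemma ecard_image: "inj_on f S \<Longrightarrow> ecard (f ` S) = ecard S"
  unfolding ecard_def by (auto simp: card_image dest: finite_imageD)

lemma ecard_eq_0_iff [simp]: "ecard S = 0 \<longleftrightarrow> S = {}"
  by (auto simp: ecard_def zero_enat_def)

lemma ecard_infinite: "infinite S \<Longrightarrow> ecard S = \<infinity>"
  by (simp add: ecard_def)

lemma finite_if_ecard_not_infinity: "ecard S \<noteq> \<infinity> \<Longrightarrow> finite S"
  by (auto simp: ecard_def split: if_splits)

lemma ecard_enat_less: "ecard {k. enat k < a} = a"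
  by (cases a) (simp_all add: ecard_def)

lemma bij_betw_if_ecard_eq:
  assumes "countable A" "countable B" "ecard A = ecard B"
  shows "\<exists>f. bij_betw f A B"
proof (cases "finite A")
  case True
  then have "finite B" "card A = card B" using assms(3) by (auto simp: ecard_def split: if_splits)
  then show ?thesis using True by (metis finite_same_card_bij)
next
  case False
  then have "infinite B" using assms(3) by (auto simp: ecard_def split: if_splits)
  obtain e where "bij_betw e A (UNIV :: nat set)"
    using countableE_infinite[OF assms(1) False] by blast
  moreover obtain g where "bij_betw g (UNIV :: nat set) B"
    using countable_infiniteE'[OF assms(2) \<open>infinite B\<close>] by blast
  ultimately show ?thesis using bij_betw_trans by blast
qed

lemma bij_betw_fibrewise:
  assumes h: "bij_betw h K L" and f: "f ` A \<subseteq> K" and g: "g ` B \<subseteq> L"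
    and F: "\<And>k. k \<in> K \<Longrightarrow> bij_betw (F k) {x\<in>A. f x = k} {y\<in>B. g y = h k}"
  shows "bij_betw (\<lambda>x. F (f x) x) A B"
proof -
  have maps: "F (f x) x \<in> B \<and> g (F (f x) x) = h (f x)" if "x \<in> A" for x
    using F[of "f x"] f that by (auto simp: bij_betw_def)
  have "inj_on (\<lambda>x. F (f x) x) A"
  proof (rule inj_onI)
    fix a b assume a: "a \<in> A" and b: "b \<in> A" and eq: "F (f a) a = F (f b) b"
    have "f a \<in> K" "f b \<in> K" "h (f a) = h (f b)" using maps[OF a] maps[OF b] eq f a b by auto
    then have "f a = f b" using h by (auto simp: bij_betw_def inj_on_def)
    then show "a = b" using F[of "f a"] f a b eq by (auto simp: bij_betw_def inj_on_def)
  qed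
  moreover have "B \<subseteq> (\<lambda>x. F (f x) x) ` A"
  proof
    fix y assume y: "y \<in> B"
    then obtain k where k: "k \<in> K" "h k = g y" using g h by (auto simp: bij_betw_def)
    then obtain x where "x \<in> A" "f x = k" "F k x = y"
      using F[OF k(1)] y by (force simp: bij_betw_def)
    then show "y \<in> (\<lambda>x. F (f x) x) ` A" by auto
  qed
  ultimately show ?thesis using maps by (auto simp: bij_betw_def)
qed

definition edges_between :: "('v, 'e) dgraph \<Rightarrow> 'v \<Rightarrow> 'v \<Rightarrow> 'e set" where
  "edges_between G x y = {e\<in>edges G. src G e = x \<and> rng G e = y}"

lemma out_edges_eq_UN: "wf_graph G \<Longrightarrow> out_edges G v = (\<Union>y\<in>verts G. edges_between G v y)"
  by (auto simp: out_edges_def edges_between_def wf_graph_def)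

lemma in_edges_eq_UN: "wf_graph G \<Longrightarrow> in_edges G v = (\<Union>x\<in>verts G. edges_between G x v)"
  by (auto simp: in_edges_def edges_between_def wf_graph_def)

lemma graph_iso_if_ecard_edges_between_eq:
  fixes G :: "('v, 'e::countable) dgraph" and H :: "('w, 'f::countable) dgraph"
  assumes wf: "wf_graph G" "wf_graph H" and \<phi>: "bij_betw \<phi> (verts G) (verts H)"
    and counts: "\<And>x y. x \<in> verts G \<Longrightarrow> y \<in> verts G \<Longrightarrow>
      ecard (edges_between G x y) = ecard (edges_between H (\<phi> x) (\<phi> y))"
  shows "graph_iso G H"
proof -
  have "\<exists>F. bij_betw F (edges_between G x y) (edges_between H (\<phi> x) (\<phi> y))"
    if "x \<in> verts G" "y \<in> verts G" for x y
    by (rule bij_betw_if_ecard_eq) (simp_all add: countableI_type counts[OF that])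
  then obtain F where F: "\<And>x y. x \<in> verts G \<Longrightarrow> y \<in> verts G \<Longrightarrow>
      bij_betw (F x y) (edges_between G x y) (edges_between H (\<phi> x) (\<phi> y))"
    by metis
  define \<psi> where "\<psi> e = F (src G e) (rng G e) e" for e
  have "bij_betw (\<lambda>e. case_prod F (src G e, rng G e) e) (edges G) (edges H)"
  proof (rule bij_betw_fibrewise[where g = "\<lambda>e. (src H e, rng H e)" and h = "map_prod \<phi> \<phi>"])
    show "bij_betw (map_prod \<phi> \<phi>) (verts G \<times> verts G) (verts H \<times> verts H)"
      by (rule bij_betw_map_prod[OF \<phi> \<phi>])
    show "bij_betw (case_prod F k) {e \<in> edges G. (src G e, rng G e) = k}
        {e \<in> edges H. (src H e, rng H e) = map_prod \<phi> \<phi> k}"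
      if "k \<in> verts G \<times> verts G" for k
      using F that by (auto simp: edges_between_def)
  qed (use wf in \<open>auto simp: wf_graph_def\<close>)
  then have "bij_betw \<psi> (edges G) (edges H)" by (simp add: \<psi>_def[abs_def])
  moreover have "src H (\<psi> e) = \<phi> (src G e) \<and> rng H (\<psi> e) = \<phi> (rng G e)" if "e \<in> edges G" for e
    using F[of "src G e" "rng G e"] wf(1) that
    by (auto simp: \<psi>_def wf_graph_def bij_betw_def edges_between_def)
  ultimately show ?thesis unfolding graph_iso_def using \<phi> by blast
qed

definition edge_code :: "nat \<Rightarrow> nat \<Rightarrow> nat \<Rightarrow> nat" where
  "edge_code x y k = prod_encode (x, prod_encode (y, k))"

lemma inj_edge_code: "inj (edge_code x y)"
  by (auto intro!: injI simp: edge_code_def prod_encode_eq)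

lemma graph_of_matrix_simps:
  "verts (graph_of_matrix N A) = {0..<N}"
  "edges (graph_of_matrix N A) = {edge_code x y k | x y k. x < N \<and> y < N \<and> enat k < A x y}"
  "src (graph_of_matrix N A) (edge_code x y k) = x"
  "rng (graph_of_matrix N A) (edge_code x y k) = y"
  unfolding graph_of_matrix_def edge_code_def by (simp_all add: prod_encode_inverse)

lemma wf_graph_of_matrix: "wf_graph (graph_of_matrix N A)"
  unfolding wf_graph_def by (auto simp: graph_of_matrix_simps)

lemma edges_between_graph_of_matrix:
  "x < N \<Longrightarrow> y < N \<Longrightarrow>
    edges_between (graph_of_matrix N A) x y = edge_code x y ` {k. enat k < A x y}"
  by (auto simp: edges_between_def graph_of_matrix_simps)

lemma ecard_edges_between_graph_of_matrix:
  "x < N \<Longrightarrow> y < N \<Longrightarrow> ecard (edges_between (graph_of_matrix N A) x y) = A x y"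
  by (simp add: edges_between_graph_of_matrix ecard_image inj_on_subset[OF inj_edge_code]
      ecard_enat_less)

lemma graph_of_matrix_cong:
  "(\<And>x y. x < N \<Longrightarrow> y < N \<Longrightarrow> A x y = B x y) \<Longrightarrow> graph_of_matrix N A = graph_of_matrix N B"
  unfolding graph_of_matrix_def
  by (intro arg_cong[where f = "\<lambda>E. \<lparr>verts = _, edges = E, src = _, rng = _\<rparr>"]) fastforce

section \<open>Splitting a vertex of the graph of a matrix\<close>

definition split_class :: "enat \<Rightarrow> enat \<Rightarrow> nat \<Rightarrow> nat" where
  "split_class c1 c2 k =
     (if c1 \<noteq> \<infinity> then (if enat k < c1 then 1 else 2)
      else if c2 \<noteq> \<infinity> then (if enat k < c2 then 2 else 1)
      else if even k then 1 else 2)"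

lemma split_class_range: "split_class c1 c2 k \<in> {1..2}"
  by (simp add: split_class_def)

lemma ecard_split_class_1: "ecard {k. enat k < c1 + c2 \<and> split_class c1 c2 k = 1} = c1"
proof (cases c1)
  case (enat a)
  then have "{k. enat k < c1 + c2 \<and> split_class c1 c2 k = 1} = {k. enat k < c1}"
    by (cases c2) (auto simp: split_class_def)
  then show ?thesis by (simp add: ecard_enat_less)
next
  case infinity
  have "infinite {k. enat k < c1 + c2 \<and> split_class c1 c2 k = 1}"
  proof (cases c2)
    case (enat b)
    then have "{b..} \<subseteq> {k. enat k < c1 + c2 \<and> split_class c1 c2 k = 1}"
      using infinity by (auto simp: split_class_def)
    then show ?thesis using infinite_Ici finite_subset by blast
  next
    case infinity2: infinity
    have "range (\<lambda>k. 2 * k) \<subseteq> {k. enat k < c1 + c2 \<and> split_class c1 c2 k = 1}"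
      using infinity infinity2 by (auto simp: split_class_def)
    moreover have "infinite (range (\<lambda>k::nat. 2 * k))"
      by (rule range_inj_infinite) (auto intro: injI)
    ultimately show ?thesis using finite_subset by blast
  qed
  then show ?thesis using infinity by (simp add: ecard_infinite)
qed

lemma ecard_split_class_2: "ecard {k. enat k < c1 + c2 \<and> split_class c1 c2 k = 2} = c2"
proof (cases c2)
  case (enat b)
  show ?thesis
  proof (cases c1)
    case (enat a)
    then have "{k. enat k < c1 + c2 \<and> split_class c1 c2 k = 2} = {a..<a + b}"
      using \<open>c2 = enat b\<close> by (auto simp: split_class_def)
    then show ?thesis using \<open>c2 = enat b\<close> by (simp add: ecard_def)
  next
    case infinity
    then have "{k. enat k < c1 + c2 \<and> split_class c1 c2 k = 2} = {k. enat k < c2}"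
      using \<open>c2 = enat b\<close> by (auto simp: split_class_def)
    then show ?thesis by (simp add: ecard_enat_less)
  qed
next
  case infinity
  have "infinite {k. enat k < c1 + c2 \<and> split_class c1 c2 k = 2}"
  proof (cases c1)
    case (enat a)
    then have "{a..} \<subseteq> {k. enat k < c1 + c2 \<and> split_class c1 c2 k = 2}"
      using infinity by (auto simp: split_class_def)
    then show ?thesis using infinite_Ici finite_subset by blast
  next
    case infinity1: infinity
    have "range (\<lambda>k. 2 * k + 1) \<subseteq> {k. enat k < c1 + c2 \<and> split_class c1 c2 k = 2}"
      using infinity infinity1 by (auto simp: split_class_def)
    moreover have "infinite (range (\<lambda>k::nat. 2 * k + 1))"
      by (rule range_inj_infinite) (auto intro: injI)
    ultimately show ?thesis using finite_subset by blast
  qed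
  then show ?thesis using infinity by (simp add: ecard_infinite)
qed

lemma ecard_split_class:
  "i \<in> {1..2} \<Longrightarrow> ecard {k. enat k < c1 + c2 \<and> split_class c1 c2 k = i} = (if i = 1 then c1 else c2)"
  using ecard_split_class_1 ecard_split_class_2 by (auto simp: le_Suc_eq numeral_2_eq_2)

definition split_origin :: "'v \<Rightarrow> 'v + nat \<Rightarrow> 'v" where
  "split_origin v a = (case a of Inl x \<Rightarrow> x | Inr _ \<Rightarrow> v)"

lemma ecard_edges_between_out_split:
  assumes "a \<in> verts (out_split_graph G v k p)" "b \<in> verts (out_split_graph G v k p)"
  shows "ecard (edges_between (out_split_graph G v k p) a b) =
    ecard {e\<in>edges_between G (split_origin v a) (split_origin v b).
             case a of Inl _ \<Rightarrow> True | Inr i \<Rightarrow> p e = i}"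
proof -
  define lift :: "'b \<Rightarrow> 'b + 'b \<times> nat" where
    "lift = (case b of Inl _ \<Rightarrow> Inl | Inr j \<Rightarrow> (\<lambda>e. Inr (e, j)))"
  have "edges_between (out_split_graph G v k p) a b =
      lift ` {e\<in>edges_between G (split_origin v a) (split_origin v b).
                case a of Inl _ \<Rightarrow> True | Inr i \<Rightarrow> p e = i}"
    using assms by (cases a; cases b)
      (auto simp: lift_def edges_between_def out_split_graph_def in_edges_def split_origin_def
        split: if_splits)
  moreover have "inj lift" by (cases b) (auto simp: lift_def intro: injI)
  ultimately show ?thesis by (simp add: ecard_image inj_on_subset)
qed

lemma ecard_edges_between_in_split:
  assumes "a \<in> verts (in_split_graph G v k p)" "b \<in> verts (in_split_graph G v k p)"
  shows "ecard (edges_between (in_split_graph G v k p) a b) =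
    ecard {e\<in>edges_between G (split_origin v a) (split_origin v b).
             case b of Inl _ \<Rightarrow> True | Inr j \<Rightarrow> p e = j}"
proof -
  define lift :: "'b \<Rightarrow> 'b + 'b \<times> nat" where
    "lift = (case a of Inl _ \<Rightarrow> Inl | Inr i \<Rightarrow> (\<lambda>e. Inr (e, i)))"
  have "edges_between (in_split_graph G v k p) a b =
      lift ` {e\<in>edges_between G (split_origin v a) (split_origin v b).
                case b of Inl _ \<Rightarrow> True | Inr j \<Rightarrow> p e = j}"
    using assms by (cases a; cases b)
      (auto simp: lift_def edges_between_def in_split_graph_def out_edges_def split_origin_def
        split: if_splits)
  moreover have "inj lift" by (cases a) (auto simp: lift_def intro: injI)
  ultimately show ?thesis by (simp add: ecard_image inj_on_subset)
qed

lemma wf_graph_out_split: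
  "wf_graph G \<Longrightarrow> \<forall>e\<in>out_edges G v. p e \<in> {1..k} \<Longrightarrow> wf_graph (out_split_graph G v k p)"
  unfolding wf_graph_def out_split_graph_def Let_def
  by (auto simp: in_edges_def out_edges_def split: if_splits)

lemma wf_graph_in_split:
  "wf_graph G \<Longrightarrow> \<forall>e\<in>in_edges G v. p e \<in> {1..k} \<Longrightarrow> wf_graph (in_split_graph G v k p)"
  unfolding wf_graph_def in_split_graph_def Let_def
  by (auto simp: in_edges_def out_edges_def split: if_splits)

definition relabel_split :: "nat \<Rightarrow> nat \<Rightarrow> nat \<Rightarrow> nat + nat" where
  "relabel_split N v i = (if i = v then Inr 1 else if i = N then Inr 2 else Inl i)"

lemma bij_betw_relabel_split:
  assumes "v < N"
  shows "bij_betw (relabel_split N v) {0..<Suc N} (Inl ` ({0..<N} - {v}) \<union> Inr ` {1..2})"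
proof -
  have "{0..<Suc N} = insert v (insert N ({0..<N} - {v}))" using assms by auto
  moreover have "relabel_split N v ` ({0..<N} - {v}) = Inl ` ({0..<N} - {v})"
    by (auto simp: relabel_split_def)
  moreover have "{1..2::nat} = {1, 2}" by auto
  ultimately show ?thesis
    using assms by (auto simp: bij_betw_def inj_on_def relabel_split_def)
qed

lemma split_origin_relabel_split [simp]:
  "split_origin v (relabel_split N v i) = (if i = N then v else i)"
  by (simp add: split_origin_def relabel_split_def)

text \<open>The new vertex \<open>N\<close> is the second part of the split vertex \<open>v\<close>: the row (column) of
  \<open>v\<close> becomes \<open>R1\<close> (\<open>C1\<close>), that of \<open>N\<close> becomes \<open>R2\<close> (\<open>C2\<close>), and the column (row) of
  \<open>v\<close> is copied to \<open>N\<close>.\<close>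

definition out_split_matrix ::
    "nat \<Rightarrow> nat \<Rightarrow> (nat \<Rightarrow> nat \<Rightarrow> enat) \<Rightarrow> (nat \<Rightarrow> enat) \<Rightarrow> (nat \<Rightarrow> enat) \<Rightarrow> nat \<Rightarrow> nat \<Rightarrow> enat" where
  "out_split_matrix N v A R1 R2 i j =
     (let j' = if j = N then v else j in if i = v then R1 j' else if i = N then R2 j' else A i j')"

definition in_split_matrix ::
    "nat \<Rightarrow> nat \<Rightarrow> (nat \<Rightarrow> nat \<Rightarrow> enat) \<Rightarrow> (nat \<Rightarrow> enat) \<Rightarrow> (nat \<Rightarrow> enat) \<Rightarrow> nat \<Rightarrow> nat \<Rightarrow> enat" where
  "in_split_matrix N v A C1 C2 i j =
     (let i' = if i = N then v else i in if j = v then C1 i' else if j = N then C2 i' else A i' j)"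

definition out_split_class :: "(nat \<Rightarrow> enat) \<Rightarrow> (nat \<Rightarrow> enat) \<Rightarrow> nat \<Rightarrow> nat" where
  "out_split_class R1 R2 e =
     (case prod_decode (snd (prod_decode e)) of (y, k) \<Rightarrow> split_class (R1 y) (R2 y) k)"

definition in_split_class :: "(nat \<Rightarrow> enat) \<Rightarrow> (nat \<Rightarrow> enat) \<Rightarrow> nat \<Rightarrow> nat" where
  "in_split_class C1 C2 e =
     (case prod_decode e of (x, yk) \<Rightarrow> split_class (C1 x) (C2 x) (snd (prod_decode yk)))"

lemma out_split_class_edge_code [simp]:
  "out_split_class R1 R2 (edge_code x y k) = split_class (R1 y) (R2 y) k"
  by (simp add: out_split_class_def edge_code_def prod_encode_inverse)

lemma in_split_class_edge_code [simp]:
  "in_split_class C1 C2 (edge_code x y k) = split_class (C1 x) (C2 x) k"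
  by (simp add: in_split_class_def edge_code_def prod_encode_inverse)

lemma out_split_class_range: "out_split_class R1 R2 e \<in> {1..2}"
  by (simp add: out_split_class_def split_class_def split: prod.split)

lemma in_split_class_range: "in_split_class C1 C2 e \<in> {1..2}"
  by (simp add: in_split_class_def split_class_def split: prod.split)

lemma ecard_split_class_edges_between:
  assumes "x < N" "y < N" "A x y = c1 + c2" "i \<in> {1..2}"
    and "\<And>k. p (edge_code x y k) = split_class c1 c2 k"
  shows "ecard {e\<in>edges_between (graph_of_matrix N A) x y. p e = i} = (if i = 1 then c1 else c2)"
proof -
  have "{e\<in>edges_between (graph_of_matrix N A) x y. p e = i} =
      edge_code x y ` {k. enat k < c1 + c2 \<and> split_class c1 c2 k = i}"
    using assms by (auto simp: edges_between_graph_of_matrix)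
  then show ?thesis
    using assms(4) by (simp add: ecard_image inj_on_subset[OF inj_edge_code] ecard_split_class)
qed

lemma ecard_edges_between_out_split_matrix:
  assumes v: "v < N" and row: "\<forall>y<N. A v y = R1 y + R2 y" and ij: "i < Suc N" "j < Suc N"
  shows "ecard (edges_between (out_split_graph (graph_of_matrix N A) v 2 (out_split_class R1 R2))
      (relabel_split N v i) (relabel_split N v j)) = out_split_matrix N v A R1 R2 i j"
proof -
  let ?G = "graph_of_matrix N A" and ?p = "out_split_class R1 R2"
  have "relabel_split N v l \<in> verts (out_split_graph ?G v 2 ?p)" if "l < Suc N" for l
    using bij_betw_apply[OF bij_betw_relabel_split[OF v]] that
    by (simp add: out_split_graph_def Let_def graph_of_matrix_simps)
  then have "ecard (edges_between (out_split_graph ?G v 2 ?p) (relabel_split N v i) (relabel_split N v j))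
      = ecard {e\<in>edges_between ?G (if i = N then v else i) (if j = N then v else j).
          case relabel_split N v i of Inl _ \<Rightarrow> True | Inr c \<Rightarrow> ?p e = c}"
    using ij by (simp add: ecard_edges_between_out_split)
  also have "\<dots> = out_split_matrix N v A R1 R2 i j"
  proof (cases "i = v \<or> i = N")
    case True
    then show ?thesis
      using ecard_split_class_edges_between[of v N "if j = N then v else j" A _ _ "if i = v then 1 else 2" ?p]
        v row ij by (auto simp: relabel_split_def out_split_matrix_def)
  next
    case False
    then show ?thesis
      using v ij by (auto simp: relabel_split_def out_split_matrix_def ecard_edges_between_graph_of_matrix)
  qed
  finally show ?thesis .
qed

lemma ecard_edges_between_in_split_matrix:
  assumes v: "v < N" and col: "\<forall>x<N. A x v = C1 x + C2 x" and ij: "i < Suc N" "j < Suc N"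
  shows "ecard (edges_between (in_split_graph (graph_of_matrix N A) v 2 (in_split_class C1 C2))
      (relabel_split N v i) (relabel_split N v j)) = in_split_matrix N v A C1 C2 i j"
proof -
  let ?G = "graph_of_matrix N A" and ?p = "in_split_class C1 C2"
  have "relabel_split N v l \<in> verts (in_split_graph ?G v 2 ?p)" if "l < Suc N" for l
    using bij_betw_apply[OF bij_betw_relabel_split[OF v]] that
    by (simp add: in_split_graph_def Let_def graph_of_matrix_simps)
  then have "ecard (edges_between (in_split_graph ?G v 2 ?p) (relabel_split N v i) (relabel_split N v j))
      = ecard {e\<in>edges_between ?G (if i = N then v else i) (if j = N then v else j).
          case relabel_split N v j of Inl _ \<Rightarrow> True | Inr c \<Rightarrow> ?p e = c}"
    using ij by (simp add: ecard_edges_between_in_split)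
  also have "\<dots> = in_split_matrix N v A C1 C2 i j"
  proof (cases "j = v \<or> j = N")
    case True
    then show ?thesis
      using ecard_split_class_edges_between[of "if i = N then v else i" N v A _ _ "if j = v then 1 else 2" ?p]
        v col ij by (auto simp: relabel_split_def in_split_matrix_def)
  next
    case False
    then show ?thesis
      using v ij by (auto simp: relabel_split_def in_split_matrix_def ecard_edges_between_graph_of_matrix)
  qed
  finally show ?thesis .
qed

lemma out_split_ok_graph_of_matrix:
  assumes v: "v < N" and row: "\<forall>y<N. A v y = R1 y + R2 y"
    and finite_part: "(\<forall>y<N. R1 y \<noteq> \<infinity>) \<or> (\<forall>y<N. R2 y \<noteq> \<infinity>)"
    and nonzero: "\<exists>y<N. R1 y \<noteq> 0" "\<exists>y<N. R2 y \<noteq> 0"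
  shows "out_split_ok (graph_of_matrix N A) v 2 (out_split_class R1 R2)"
proof -
  let ?G = "graph_of_matrix N A" and ?p = "out_split_class R1 R2"
  define R where "R c = (if c = 1 then R1 else R2)" for c :: nat
  have part: "{e\<in>out_edges ?G v. ?p e = c} = (\<Union>y<N. {e\<in>edges_between ?G v y. ?p e = c})" for c
    by (auto simp: out_edges_eq_UN[OF wf_graph_of_matrix] graph_of_matrix_simps)
  have piece: "ecard {e\<in>edges_between ?G v y. ?p e = c} = R c y" if "y < N" "c \<in> {1..2}" for y c
    using ecard_split_class_edges_between[OF v that(1) _ that(2)] row that(1) by (simp add: R_def)
  have nonempty: "{e\<in>out_edges ?G v. ?p e = c} \<noteq> {}" if "c \<in> {1..2}" for c
  proof -
    from that have "c = 1 \<or> c = 2" by auto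
    then obtain y where y: "y < N" "R c y \<noteq> 0" using nonzero by (auto simp: R_def)
    then have "{e\<in>edges_between ?G v y. ?p e = c} \<noteq> {}" using piece[OF y(1) that] y(2) ecard_eq_0_iff by metis
    then show ?thesis using y(1) by (auto simp: part)
  qed
  have finite: "finite {e\<in>out_edges ?G v. ?p e = c}" if "c \<in> {1..2}" "\<forall>y<N. R c y \<noteq> \<infinity>" for c
    using piece that by (auto simp: part intro!: finite_if_ecard_not_infinity)
  show ?thesis
    unfolding out_split_ok_def
  proof (intro conjI ballI impI)
    show "v \<in> verts ?G" using v by (simp add: graph_of_matrix_simps)
    show "\<not> is_sink ?G v" using nonempty[of 1] by (auto simp: is_sink_def)
    show "{e\<in>out_edges ?G v. ?p e = c} \<noteq> {}" if "c \<in> {1..2}" for c using nonempty that .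
    show "i = j" if "i \<in> {1..2}" "j \<in> {1..2}"
      "infinite {e\<in>out_edges ?G v. ?p e = i} \<and> infinite {e\<in>out_edges ?G v. ?p e = j}" for i j
    proof (rule ccontr)
      assume "i \<noteq> j"
      with that(1,2) have "{i, j} = {1, 2}" by auto
      then have "infinite {e\<in>out_edges ?G v. ?p e = 1}" "infinite {e\<in>out_edges ?G v. ?p e = 2}"
        using that(3) by (auto simp: doubleton_eq_iff)
      then show False using finite_part finite[of 1] finite[of 2] by (auto simp: R_def)
    qed
  qed (use out_split_class_range in auto)
qed

lemma in_split_ok_graph_of_matrix:
  assumes v: "v < N" and regular: "\<forall>y<N. A v y \<noteq> \<infinity>" "\<exists>y<N. A v y \<noteq> 0"
    and col: "\<forall>x<N. A x v = C1 x + C2 x"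
    and nonzero: "\<exists>x<N. C1 x \<noteq> 0" "\<exists>x<N. C2 x \<noteq> 0"
  shows "in_split_ok (graph_of_matrix N A) v 2 (in_split_class C1 C2)"
proof -
  let ?G = "graph_of_matrix N A" and ?p = "in_split_class C1 C2"
  define C where "C c = (if c = 1 then C1 else C2)" for c :: nat
  have part: "{e\<in>in_edges ?G v. ?p e = c} = (\<Union>x<N. {e\<in>edges_between ?G x v. ?p e = c})" for c
    by (auto simp: in_edges_eq_UN[OF wf_graph_of_matrix] graph_of_matrix_simps)
  have piece: "ecard {e\<in>edges_between ?G x v. ?p e = c} = C c x" if "x < N" "c \<in> {1..2}" for x c
    using ecard_split_class_edges_between[OF that(1) v _ that(2)] col that(1) by (simp add: C_def)
  have nonempty: "{e\<in>in_edges ?G v. ?p e = c} \<noteq> {}" if "c \<in> {1..2}" for c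
  proof -
    from that have "c = 1 \<or> c = 2" by auto
    then obtain x where x: "x < N" "C c x \<noteq> 0" using nonzero by (auto simp: C_def)
    then have "{e\<in>edges_between ?G x v. ?p e = c} \<noteq> {}" using piece[OF x(1) that] x(2) ecard_eq_0_iff by metis
    then show ?thesis using x(1) by (auto simp: part)
  qed
  have out_edges: "out_edges ?G v = (\<Union>y<N. edges_between ?G v y)"
    by (auto simp: out_edges_eq_UN[OF wf_graph_of_matrix] graph_of_matrix_simps)
  have "finite (out_edges ?G v)"
    using regular(1) v
    by (auto simp: out_edges ecard_edges_between_graph_of_matrix intro!: finite_if_ecard_not_infinity)
  moreover have "out_edges ?G v \<noteq> {}"
    using regular(2) v by (auto simp: out_edges ecard_edges_between_graph_of_matrix[symmetric])
  ultimately show ?thesis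
    unfolding in_split_ok_def
  proof (intro conjI ballI)
    show "v \<in> verts ?G" using v by (simp add: graph_of_matrix_simps)
    show "\<not> is_source ?G v" using nonempty[of 1] by (auto simp: is_source_def)
    show "{e\<in>in_edges ?G v. ?p e = c} \<noteq> {}" if "c \<in> {1..2}" for c using nonempty that .
  qed (use in_split_class_range in \<open>auto simp: is_regular_def is_sink_def is_inf_emitter_def\<close>)
qed

lemma move_step_out_split_matrix:
  assumes v: "v < N" and row: "\<forall>y<N. A v y = R1 y + R2 y"
    and "(\<forall>y<N. R1 y \<noteq> \<infinity>) \<or> (\<forall>y<N. R2 y \<noteq> \<infinity>)" "\<exists>y<N. R1 y \<noteq> 0" "\<exists>y<N. R2 y \<noteq> 0"
    and \<sigma>: "bij_betw \<sigma> {0..<Suc N} {0..<Suc N}"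
    and B: "\<And>i j. i < Suc N \<Longrightarrow> j < Suc N \<Longrightarrow> B i j = out_split_matrix N v A R1 R2 (\<sigma> i) (\<sigma> j)"
  shows "move_step (graph_of_matrix N A) (graph_of_matrix (Suc N) B)"
proof -
  let ?S = "out_split_graph (graph_of_matrix N A) v 2 (out_split_class R1 R2)"
  have ok: "out_split_ok (graph_of_matrix N A) v 2 (out_split_class R1 R2)"
    using assms(1-5) by (rule out_split_ok_graph_of_matrix)
  have "graph_iso (graph_of_matrix (Suc N) B) ?S"
  proof (rule graph_iso_if_ecard_edges_between_eq)
    show "wf_graph ?S"
      by (rule wf_graph_out_split[OF wf_graph_of_matrix]) (use out_split_class_range in blast)
    show "bij_betw (relabel_split N v \<circ> \<sigma>) (verts (graph_of_matrix (Suc N) B)) (verts ?S)"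
      using bij_betw_trans[OF \<sigma> bij_betw_relabel_split[OF v]]
      by (simp add: out_split_graph_def Let_def graph_of_matrix_simps)
    show "ecard (edges_between (graph_of_matrix (Suc N) B) i j) =
        ecard (edges_between ?S ((relabel_split N v \<circ> \<sigma>) i) ((relabel_split N v \<circ> \<sigma>) j))"
      if "i \<in> verts (graph_of_matrix (Suc N) B)" "j \<in> verts (graph_of_matrix (Suc N) B)" for i j
      using that bij_betw_apply[OF \<sigma>] B
      by (simp add: graph_of_matrix_simps ecard_edges_between_graph_of_matrix
          ecard_edges_between_out_split_matrix[of v N A R1 R2, OF v row])
  qed (rule wf_graph_of_matrix)
  then show ?thesis using ok wf_graph_of_matrix unfolding move_step_def by blast
qed

lemma move_step_in_split_matrix:
  assumes v: "v < N" and "\<forall>y<N. A v y \<noteq> \<infinity>" "\<exists>y<N. A v y \<noteq> 0"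
    and col: "\<forall>x<N. A x v = C1 x + C2 x" and "\<exists>x<N. C1 x \<noteq> 0" "\<exists>x<N. C2 x \<noteq> 0"
    and \<sigma>: "bij_betw \<sigma> {0..<Suc N} {0..<Suc N}"
    and B: "\<And>i j. i < Suc N \<Longrightarrow> j < Suc N \<Longrightarrow> B i j = in_split_matrix N v A C1 C2 (\<sigma> i) (\<sigma> j)"
  shows "move_step (graph_of_matrix N A) (graph_of_matrix (Suc N) B)"
proof -
  let ?S = "in_split_graph (graph_of_matrix N A) v 2 (in_split_class C1 C2)"
  have ok: "in_split_ok (graph_of_matrix N A) v 2 (in_split_class C1 C2)"
    using assms(1-6) by (rule in_split_ok_graph_of_matrix)
  have "graph_iso (graph_of_matrix (Suc N) B) ?S"
  proof (rule graph_iso_if_ecard_edges_between_eq)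
    show "wf_graph ?S"
      by (rule wf_graph_in_split[OF wf_graph_of_matrix]) (use in_split_class_range in blast)
    show "bij_betw (relabel_split N v \<circ> \<sigma>) (verts (graph_of_matrix (Suc N) B)) (verts ?S)"
      using bij_betw_trans[OF \<sigma> bij_betw_relabel_split[OF v]]
      by (simp add: in_split_graph_def Let_def graph_of_matrix_simps)
    show "ecard (edges_between (graph_of_matrix (Suc N) B) i j) =
        ecard (edges_between ?S ((relabel_split N v \<circ> \<sigma>) i) ((relabel_split N v \<circ> \<sigma>) j))"
      if "i \<in> verts (graph_of_matrix (Suc N) B)" "j \<in> verts (graph_of_matrix (Suc N) B)" for i j
      using that bij_betw_apply[OF \<sigma>] B
      by (simp add: graph_of_matrix_simps ecard_edges_between_graph_of_matrix
          ecard_edges_between_in_split_matrix[of v N A C1 C2, OF v col])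
  qed (rule wf_graph_of_matrix)
  then show ?thesis using ok wf_graph_of_matrix unfolding move_step_def by blast
qed

section \<open>Adding the column of an infinite emitter\<close>

lemma move_equiv_if_move_step: "move_step G E \<Longrightarrow> move_equiv G E"
  unfolding move_equiv_def by auto

lemma move_equiv_if_move_step_converse: "move_step E G \<Longrightarrow> move_equiv G E"
  unfolding move_equiv_def by auto

lemma move_equiv_trans: "move_equiv G E \<Longrightarrow> move_equiv E F \<Longrightarrow> move_equiv G F"
  unfolding move_equiv_def by (rule rtranclp_trans)

lemma move_equiv_add_column:
  assumes w: "w < N" and s: "s < N" "s \<noteq> w"
    and emitter: "\<forall>y<N. A s y = \<infinity>" and regular: "\<forall>y<N. A w y \<noteq> \<infinity>" "\<exists>y<N. A w y \<noteq> 0"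
  shows "move_equiv (graph_of_matrix N A)
    (graph_of_matrix N (\<lambda>x y. if y = w then A x w + A x s else A x y))"
proof -
  define S where "S = out_split_matrix N s A (A w) (\<lambda>_. \<infinity>)"
  have finite_sum: "A w w + A w s \<noteq> \<infinity>" using regular(1) w s unfolding plus_eq_infty_iff_enat by blast
  have "move_step (graph_of_matrix N A) (graph_of_matrix (Suc N) S)"
    by (rule move_step_out_split_matrix[where \<sigma> = id]) (use assms in \<open>auto simp: S_def\<close>)
  \<comment> \<open>the copy \<open>N\<close> of \<open>s\<close> carrying the row of \<open>w\<close> is the second part of an in-split of \<open>w\<close>\<close>
  moreover have "move_step (graph_of_matrix N (\<lambda>x y. if y = w then A x w + A x s else A x y))
      (graph_of_matrix (Suc N) S)"
    by (rule move_step_in_split_matrix[where ?C1.0 = "\<lambda>x. A x w" and ?C2.0 = "\<lambda>x. A x s"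
          and \<sigma> = "transpose s N"])
      (use assms finite_sum in \<open>auto simp: S_def out_split_matrix_def in_split_matrix_def Let_def
        transpose_def\<close>)
  ultimately show ?thesis
    by (blast intro: move_equiv_trans move_equiv_if_move_step move_equiv_if_move_step_converse)
qed

lemma move_equiv_add_column_multiple:
  assumes w: "w < N" and s: "s < N" "s \<noteq> w"
    and emitter: "\<forall>y<N. A s y = \<infinity>" and regular: "\<forall>y<N. A w y \<noteq> \<infinity>" "\<exists>y<N. A w y \<noteq> 0"
  shows "move_equiv (graph_of_matrix N A)
    (graph_of_matrix N (\<lambda>x y. if y = w then A x w + of_nat q * A x s else A x y))"
proof (induction q)
  case 0
  have "(\<lambda>x y. if y = w then A x w + of_nat 0 * A x s else A x y) = A" by (intro ext) auto
  then show ?case by (simp add: move_equiv_def)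
next
  case (Suc q)
  define B where "B = (\<lambda>x y. if y = w then A x w + of_nat q * A x s else A x y)"
  have add: "move_equiv (graph_of_matrix N B)
      (graph_of_matrix N (\<lambda>x y. if y = w then B x w + B x s else B x y))"
  proof (rule move_equiv_add_column[OF w s])
    show "\<forall>y<N. B s y = \<infinity>" using emitter s w by (simp add: B_def)
    have "A w w + of_nat q * A w s \<noteq> \<infinity>"
      using regular(1) w s unfolding plus_eq_infty_iff_enat imult_is_infinity
      by (simp add: of_nat_eq_enat)
    then show "\<forall>y<N. B w y \<noteq> \<infinity>" using regular(1) by (simp add: B_def)
    show "\<exists>y<N. B w y \<noteq> 0" using regular(2) by (auto simp: B_def)
  qed
  have "A x w + of_nat q * A x s + A x s = A x w + of_nat (Suc q) * A x s" for x
    by (simp add: algebra_simps)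
  then have "(\<lambda>x y. if y = w then B x w + B x s else B x y) =
      (\<lambda>x y. if y = w then A x w + of_nat (Suc q) * A x s else A x y)"
    using s by (intro ext) (simp add: B_def)
  then show ?case using move_equiv_trans[OF Suc.IH[folded B_def] add] by simp
qed

section \<open>The construction\<close>

locale positive_top_rows =
  fixes C :: "nat mat" and n m :: nat
  assumes m_less_n: "m < n" and m_pos: "0 < m"
    and C_pos: "\<And>x y. x < m \<Longrightarrow> y < n \<Longrightarrow> 0 < C $$ (x, y)"
begin

abbreviation c :: "nat \<Rightarrow> nat \<Rightarrow> nat" where
  "c x y \<equiv> C $$ (x, y)"

definition d :: "nat \<Rightarrow> nat" where
  "d x = (if x = 0 then 1 else 0) + c x 0 + 2 * c x m"

lemma d_0_ge: "4 \<le> d 0"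
  using C_pos[of 0 0] C_pos[of 0 m] m_pos m_less_n by (simp add: d_def)

lemma d_ge: "x < m \<Longrightarrow> 3 \<le> d x"
  using C_pos[of x 0] C_pos[of x m] m_less_n by (simp add: d_def)

definition M0 :: "nat \<Rightarrow> nat \<Rightarrow> enat" where
  "M0 x y = (if x < m then enat ((if x = y then 1 else 0) + c x y) else \<infinity>)"

definition M1 :: "nat \<Rightarrow> nat \<Rightarrow> enat" where
  "M1 x y = (if x < m then enat (if y = 0 then d x else (if x = y then 1 else 0) + c x y) else \<infinity>)"

definition M2 :: "nat \<Rightarrow> nat \<Rightarrow> enat" where
  "M2 = in_split_matrix n 0 M1
     (\<lambda>x. if x < m then 1 else \<infinity>) (\<lambda>x. if x < m then enat (d x - 1) else \<infinity>)"

definition M3 :: "nat \<Rightarrow> nat \<Rightarrow> enat" where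
  "M3 = in_split_matrix (Suc n) n M2
     (\<lambda>x. if x < m \<or> x = n then 1 else \<infinity>)
     (\<lambda>x. if x < m then enat (d x - 2) else if x = n then enat (d 0 - 2) else \<infinity>)"

text \<open>Vertex \<open>0\<close> of \<open>M4\<close> emits twice the edges of vertex \<open>n\<close>; splitting them in halves
  gives \<open>M3\<close>.\<close>

definition M4 :: "nat \<Rightarrow> nat \<Rightarrow> enat" where
  "M4 i j =
    (if i = 0 then (if j = 0 then 2 else if j = n then enat (2 * (d 0 - 2)) else enat (2 * c 0 j))
     else if i < m then
       (if j = 0 then 1 else if j = n then enat (d i - 2) else enat ((if i = j then 1 else 0) + c i j))
     else if i < n then \<infinity>
     else (if j = 0 then 1 else if j = n then enat (d 0 - 2) else enat (c 0 j)))"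

text \<open>The row of \<open>n\<close> in \<open>M4\<close> with one loop at \<open>n\<close> redirected to \<open>m\<close>.\<close>

definition split_row :: "nat \<Rightarrow> enat" where
  "split_row y =
    (if y = 0 then 1 else if y = n then enat (d 0 - 3)
     else if y = m then enat (c 0 m + 1) else enat (c 0 y))"

text \<open>Position \<open>k\<close> of the final matrix is vertex \<open>final_order k\<close> of the out-split of
  \<open>M4\<close> at \<open>m\<close>, whose parts are \<open>m\<close> (row \<open>split_row\<close>) and \<open>Suc n\<close> (infinite row).\<close>

definition final_order :: "nat \<Rightarrow> nat" where
  "final_order k =
    (if k < m then k else if k = m then n else if k = Suc m then m
     else if k = Suc (Suc m) then Suc n else k - 2)"

definition M5 :: "nat \<Rightarrow> nat \<Rightarrow> enat" where
  "M5 k l = out_split_matrix (Suc n) m M4 split_row (\<lambda>_. \<infinity>) (final_order k) (final_order l)"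

lemma graph_of_matrix_J_plus_C:
  "graph_of_matrix n (\<lambda>i j. Jmat n m i j + enat (C $$ (i, j))) = graph_of_matrix n M0"
  by (rule graph_of_matrix_cong) (auto simp: M0_def Jmat_def one_enat_def zero_enat_def)

lemma move_equiv_M0_M1: "move_equiv (graph_of_matrix n M0) (graph_of_matrix n M1)"
proof -
  have "move_equiv (graph_of_matrix n M0)
      (graph_of_matrix n (\<lambda>x y. if y = 0 then M0 x 0 + of_nat 2 * M0 x m else M0 x y))"
  proof (rule move_equiv_add_column_multiple)
    show "\<exists>y<n. M0 0 y \<noteq> 0"
      using m_pos m_less_n by (intro exI[of _ 0]) (simp add: M0_def zero_enat_def)
  qed (use m_less_n m_pos in \<open>auto simp: M0_def\<close>)
  moreover have "graph_of_matrix n (\<lambda>x y. if y = 0 then M0 x 0 + of_nat 2 * M0 x m else M0 x y) =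
      graph_of_matrix n M1"
    by (rule graph_of_matrix_cong) (use m_less_n m_pos in \<open>auto simp: M0_def M1_def d_def numeral_eq_enat\<close>)
  ultimately show ?thesis by simp
qed

lemma move_step_M1_M2: "move_step (graph_of_matrix n M1) (graph_of_matrix (Suc n) M2)"
proof (rule move_step_in_split_matrix[where \<sigma> = id])
  show "\<forall>x<n. M1 x 0 = (if x < m then 1 else \<infinity>) + (if x < m then enat (d x - 1) else \<infinity>)"
    by (auto simp: M1_def one_enat_def dest: d_ge)
  show "\<exists>y<n. M1 0 y \<noteq> 0"
    using m_pos m_less_n d_0_ge by (intro exI[of _ 0]) (auto simp: M1_def zero_enat_def)
  show "\<exists>x<n. (if x < m then 1 else \<infinity>) \<noteq> (0::enat)"
    using m_pos m_less_n by (intro exI[of _ 0]) simp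
qed (use m_less_n m_pos in \<open>auto simp: M1_def M2_def\<close>)

lemma move_step_M2_M3: "move_step (graph_of_matrix (Suc n) M2) (graph_of_matrix (Suc (Suc n)) M3)"
proof (rule move_step_in_split_matrix[where \<sigma> = id])
  show "\<forall>x<Suc n. M2 x n = (if x < m \<or> x = n then 1 else \<infinity>) +
      (if x < m then enat (d x - 2) else if x = n then enat (d 0 - 2) else \<infinity>)"
    using d_0_ge m_less_n m_pos by (auto simp: M2_def in_split_matrix_def one_enat_def dest: d_ge)
  show "\<exists>y<Suc n. M2 n y \<noteq> 0"
    using m_less_n by (intro exI[of _ 0]) (auto simp: M2_def in_split_matrix_def)
qed (use m_less_n m_pos in \<open>auto simp: M1_def M2_def M3_def in_split_matrix_def one_enat_def\<close>)

lemma move_step_M4_M3: "move_step (graph_of_matrix (Suc n) M4) (graph_of_matrix (Suc (Suc n)) M3)"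
proof (rule move_step_out_split_matrix[where \<sigma> = "transpose n (Suc n)"])
  show "\<forall>y<Suc n. M4 0 y = M4 n y + M4 n y"
    using m_less_n by (auto simp: M4_def mult_2 numeral_eq_enat)
  have "\<exists>y<Suc n. M4 n y \<noteq> 0"
    using m_less_n by (intro exI[of _ 0]) (simp add: M4_def)
  then show "\<exists>y<Suc n. M4 n y \<noteq> 0" "\<exists>y<Suc n. M4 n y \<noteq> 0" by blast+
qed (use m_less_n m_pos in \<open>auto simp: M4_def M3_def M2_def M1_def in_split_matrix_def
    out_split_matrix_def Let_def transpose_def one_enat_def numeral_eq_enat mult_2\<close>)

lemma bij_betw_final_order: "bij_betw final_order {0..<Suc (Suc n)} {0..<Suc (Suc n)}"
proof -
  have "inj_on final_order {0..<Suc (Suc n)}"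
    using m_less_n by (intro inj_onI) (auto simp: final_order_def split: if_splits)
  moreover have "final_order ` {0..<Suc (Suc n)} \<subseteq> {0..<Suc (Suc n)}"
    using m_less_n by (auto simp: final_order_def)
  ultimately show ?thesis by (simp add: bij_betw_def endo_inj_surj)
qed

lemma move_step_M4_M5: "move_step (graph_of_matrix (Suc n) M4) (graph_of_matrix (Suc (Suc n)) M5)"
proof (rule move_step_out_split_matrix[of m "Suc n" M4 split_row "\<lambda>_. \<infinity>", OF _ _ _ _ _ bij_betw_final_order])
  show "\<exists>y<Suc n. split_row y \<noteq> 0" by (intro exI[of _ 0]) (simp add: split_row_def)
  show "(\<forall>y<Suc n. split_row y \<noteq> \<infinity>) \<or> (\<forall>y<Suc n. (\<infinity>::enat) \<noteq> \<infinity>)"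
    by (simp add: split_row_def one_enat_def)
qed (use m_less_n m_pos in \<open>auto simp: M4_def split_row_def M5_def\<close>)

text \<open>Column \<open>l\<close> of \<open>M5\<close> is a copy of column \<open>col_origin l\<close> of \<open>M4\<close>.\<close>

definition col_origin :: "nat \<Rightarrow> nat" where
  "col_origin l = (if l < m then l else if l = m then n else if l \<le> Suc (Suc m) then m else l - 2)"

lemma M5_regular_rows: "k < m \<Longrightarrow> l < n + 2 \<Longrightarrow> M5 k l = M4 k (col_origin l)"
  using m_less_n by (auto simp: M5_def out_split_matrix_def Let_def final_order_def col_origin_def)

lemma M5_row_m: "l < n + 2 \<Longrightarrow> M5 m l = M4 n (col_origin l)"
  using m_less_n by (auto simp: M5_def out_split_matrix_def Let_def final_order_def col_origin_def)

lemma M5_row_Suc_m: "l < n + 2 \<Longrightarrow> M5 (Suc m) l = split_row (col_origin l)"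
  using m_less_n by (auto simp: M5_def out_split_matrix_def Let_def final_order_def col_origin_def)

lemma M5_bottom_rows: "m + 2 \<le> k \<Longrightarrow> k < n + 2 \<Longrightarrow> l < n + 2 \<Longrightarrow> M5 k l = \<infinity>"
  using m_less_n m_pos
  by (auto simp: M5_def out_split_matrix_def Let_def final_order_def M4_def)

lemma col_origin_simps:
  assumes "l < n + 2"
  shows "col_origin l < Suc n" "col_origin l = 0 \<longleftrightarrow> l = 0" "col_origin l = n \<longleftrightarrow> l = m"
    "col_origin l = m \<longleftrightarrow> l = Suc m \<or> l = Suc (Suc m)" "l < m \<Longrightarrow> col_origin l = l"
  using assms m_less_n m_pos by (auto simp: col_origin_def)

lemma M5_top_rows_ge:
  assumes k: "k < m + 2" and l: "l < n + 2"
  shows "\<exists>a. M5 k l = enat a \<and> 1 + (if k = l then 1 else 0) \<le> a"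
proof -
  note j = col_origin_simps[OF l]
  have d0: "2 \<le> d 0 - 2" "1 \<le> d 0 - 3" using d_0_ge by simp_all
  have pos: "1 \<le> c x (col_origin l)" if "x < m" "col_origin l \<noteq> n" for x
    using C_pos[OF that(1)] j(1) that(2) by (simp add: Suc_le_eq)
  consider (regular) "k < m" | (hub) "k = m" | (split) "k = Suc m" using k by linarith
  then show ?thesis
  proof cases
    case regular
    have same: "k = col_origin l \<longleftrightarrow> k = l"
      using regular l m_less_n by (auto simp: col_origin_def)
    consider (zero) "l = 0" | (hub) "l = m" | (other) "l \<noteq> 0" "l \<noteq> m" by blast
    then show ?thesis
    proof cases
      case zero
      then show ?thesis using M5_regular_rows[OF regular l] j regular
        by (simp add: M4_def numeral_eq_enat one_enat_def)
    next
      case hub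
      then show ?thesis using M5_regular_rows[OF regular l] j regular d_0_ge d_ge[OF regular]
        by (auto simp: M4_def)
    next
      case other
      then show ?thesis
        using M5_regular_rows[OF regular l] j same pos[OF regular] pos[OF m_pos] regular m_less_n
        by (simp add: M4_def)
    qed
  next
    case hub
    show ?thesis unfolding hub
      using M5_row_m[OF l] j pos[OF m_pos] d0 m_pos m_less_n by (simp add: M4_def one_enat_def)
  next
    case split
    show ?thesis unfolding split
      using M5_row_Suc_m[OF l] j pos[OF m_pos] d0 C_pos[OF m_pos m_less_n] m_less_n
      by (simp add: split_row_def one_enat_def)
  qed
qed

lemma M5_first_column:
  assumes "k < m + 2"
  shows "M5 k 0 = enat (if k = 0 then 2 else 1)"
proof -
  consider "k < m" | "k = m" | "k = Suc m" using assms by linarith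
  then show ?thesis
    using M5_regular_rows[of k 0] M5_row_m[of 0] M5_row_Suc_m[of 0] m_less_n m_pos
    by cases (auto simp: col_origin_def M4_def split_row_def numeral_eq_enat one_enat_def)
qed

lemma M5_rows_m_Suc_m:
  assumes "l < m + 2"
  shows "int (the_enat (M5 m l)) - (if m = l then 1 else 0) =
    int (the_enat (M5 (Suc m) l)) - (if Suc m = l then 1 else 0)"
proof -
  have "l < n + 2" using assms m_less_n by simp
  note rows = M5_row_m[OF this] M5_row_Suc_m[OF this]
  consider "l < m" | "l = m" | "l = Suc m" using assms by linarith
  then show ?thesis
  proof cases
    case 1
    then show ?thesis using rows m_less_n by (simp add: col_origin_def M4_def split_row_def)
  next
    case 2
    have "int (d 0 - 2) - 1 = int (d 0 - 3)" using d_0_ge by simp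
    then show ?thesis unfolding 2 using rows[unfolded 2] m_less_n by (simp add: col_origin_def M4_def split_row_def)
  next
    case 3
    show ?thesis unfolding 3 using rows[unfolded 3] m_less_n m_pos by (simp add: col_origin_def M4_def split_row_def)
  qed
qed

definition D :: "int mat" where
  "D = mat (n + 2) (n + 2)
     (\<lambda>(i, l). if i < m + 2 then int (the_enat (M5 i l)) - (if i = l then 1 else 0) else 0)"

lemma D_carrier: "D \<in> carrier_mat (n + 2) (n + 2)"
  by (simp add: D_def)

lemma D_bottom_rows: "m + 2 \<le> i \<Longrightarrow> i < n + 2 \<Longrightarrow> l < n + 2 \<Longrightarrow> D $$ (i, l) = 0"
  by (simp add: D_def)

lemma D_top_rows_pos: "i < m + 2 \<Longrightarrow> l < n + 2 \<Longrightarrow> 0 < D $$ (i, l)"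
  using M5_top_rows_ge[of i l] m_less_n by (auto simp: D_def)

lemma D_first_column: "i < m + 2 \<Longrightarrow> D $$ (i, 0) = 1"
  using M5_first_column[of i] m_less_n by (simp add: D_def)

lemma det_D_corner: "det (mat (m + 2) (m + 2) (\<lambda>(i, l). D $$ (i, l))) = 0"
proof (rule det_identical_rows[of _ "m + 2" m "Suc m"])
  have "D $$ (m, l) = D $$ (Suc m, l)" if "l < m + 2" for l
    using M5_rows_m_Suc_m[OF that] that m_less_n by (simp add: D_def)
  then show "row (mat (m + 2) (m + 2) (\<lambda>(i, l). D $$ (i, l))) m =
      row (mat (m + 2) (m + 2) (\<lambda>(i, l). D $$ (i, l))) (Suc m)"
    by (intro eq_vecI) simp_all
qed auto

lemma graph_of_matrix_J_plus_D:
  "graph_of_matrix (n + 2) (\<lambda>i j. Jmat (n + 2) (m + 2) i j + enat (nat (D $$ (i, j)))) =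
    graph_of_matrix (Suc (Suc n)) M5"
proof -
  have "Jmat (n + 2) (m + 2) i j + enat (nat (D $$ (i, j))) = M5 i j" if "i < n + 2" "j < n + 2" for i j
    using that M5_top_rows_ge[of i j] M5_bottom_rows[of i j]
    by (cases "i < m + 2") (auto simp: D_def Jmat_def one_enat_def)
  then have "graph_of_matrix (n + 2) (\<lambda>i j. Jmat (n + 2) (m + 2) i j + enat (nat (D $$ (i, j)))) =
      graph_of_matrix (n + 2) M5"
    by (rule graph_of_matrix_cong)
  then show ?thesis unfolding add_2_eq_Suc' .
qed

lemma move_equiv_J_plus_C_J_plus_D:
  "move_equiv (graph_of_matrix n (\<lambda>i j. Jmat n m i j + enat (C $$ (i, j))))
    (graph_of_matrix (n + 2) (\<lambda>i j. Jmat (n + 2) (m + 2) i j + enat (nat (D $$ (i, j)))))"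
  unfolding graph_of_matrix_J_plus_C graph_of_matrix_J_plus_D
  using move_equiv_M0_M1 move_equiv_if_move_step[OF move_step_M1_M2]
    move_equiv_if_move_step[OF move_step_M2_M3] move_equiv_if_move_step_converse[OF move_step_M4_M3]
    move_equiv_if_move_step[OF move_step_M4_M5]
  by (metis move_equiv_trans)

end

theorem proposition8p3:
  fixes C :: "nat mat" and n m :: nat
  assumes "C \<in> carrier_mat n n"
    and "m \<le> n" and "m \<noteq> n"
    and "\<forall>i<m. \<forall>j<n. C $$ (i, j) \<noteq> 0"
    and "\<forall>i. m \<le> i \<and> i < n \<longrightarrow> (\<forall>j<n. C $$ (i, j) = 0)"
    and "\<exists>i<n. \<exists>j<n. C $$ (i, j) = 1"
  shows "\<exists>D :: int mat. D \<in> carrier_mat (n + 2) (n + 2) \<and>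
    (\<forall>i. m + 2 \<le> i \<and> i < n + 2 \<longrightarrow> (\<forall>l<n + 2. D $$ (i, l) = 0)) \<and>
    (\<forall>i<m + 2. \<forall>l<n + 2. D $$ (i, l) > 0) \<and>
    (\<forall>i<m + 2. D $$ (i, 0) = 1) \<and>
    det (mat (m + 2) (m + 2) (\<lambda>(i, l). D $$ (i, l))) = 0 \<and>
    move_equiv
      (graph_of_matrix n (\<lambda>i j. Jmat n m i j + enat (C $$ (i, j))))
      (graph_of_matrix (n + 2) (\<lambda>i j. Jmat (n + 2) (m + 2) i j + enat (nat (D $$ (i, j)))))"
proof -
  obtain i j where ij: "i < n" "j < n" "C $$ (i, j) = 1" using assms(6) by blast
  have "i < m"
  proof (rule ccontr)
    assume "\<not> i < m"
    then show False using assms(5) ij by auto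
  qed
  then interpret positive_top_rows C n m
    using assms(2-4) by unfold_locales auto
  show ?thesis
    by (intro exI[of _ D] conjI allI impI D_carrier D_bottom_rows D_top_rows_pos D_first_column
        det_D_corner move_equiv_J_plus_C_J_plus_D) auto
qed

end
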